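(* Let $m$ and $m_1$ be positive integers, $n=mm_1+2$, and let $\phi$ be a homogeneous polynomial on $\mathbb{R}^n$ of degree $m$ satisfying $|\nabla\phi(x)|^2=m^2|x|^{2m-2}$ and $\Delta\phi(x)=0$. Then: (i) $u=\operatorname{arctanh}\big(\phi(x)|x|^{-m}\big)$ is $p$-harmonic with $p=1+m_1$; (ii) $u=\dfrac{\phi(x)}{\sqrt{|x|^{2m}-\phi(x)^2}}$ is $p$-harmonic with $p=1+\tfrac12 m_1$; (iii) $u=\arcsin\big(\phi(x)|x|^{-m}\big)$ is $\infty$-harmonic, i.e. $\nabla u\cdot\nabla|\nabla u|^2=0$. Moreover, (iv) for every positive integer $k$, the function $u(x,y)=\ln\frac{|x|}{|y|}$, $(x,y)\in\mathbb{R}^k\times\mathbb{R}^k$, is $k$-harmonic in $\mathbb{R}^{2k}$.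
   Context: The $p$-Laplacian of a $C^2$ function $u$ is $\Delta_p u:=|\nabla u|^2\Delta u+\tfrac{p-2}{2}\nabla u\cdot\nabla|\nabla u|^2$; $u$ is $p$-harmonic if $\Delta_p u=0$ (on the open set where $u$ is defined and smooth). *)

theory Defs
  imports "HOL-Analysis.Analysis"
begin

text \<open>Partial derivative of a real-valued function on a Euclidean space in the
  direction of a basis vector (meaningful where the function is differentiable).\<close>
definition pderiv_dir :: "('a::euclidean_space \<Rightarrow> real) \<Rightarrow> 'a \<Rightarrow> 'a \<Rightarrow> real" where
  "pderiv_dir f i x = frechet_derivative f (at x) i"

definition grad :: "('a::euclidean_space \<Rightarrow> real) \<Rightarrow> 'a \<Rightarrow> 'a" where
  "grad f x = (\<Sum>i\<in>Basis. pderiv_dir f i x *\<^sub>R i)"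

definition laplacian :: "('a::euclidean_space \<Rightarrow> real) \<Rightarrow> 'a \<Rightarrow> real" where
  "laplacian f x = (\<Sum>i\<in>Basis. pderiv_dir (pderiv_dir f i) i x)"

definition C2_on :: "'a::euclidean_space set \<Rightarrow> ('a \<Rightarrow> real) \<Rightarrow> bool" where
  "C2_on S f \<longleftrightarrow> (\<forall>x\<in>S. f differentiable (at x)) \<and>
     (\<forall>i\<in>Basis. \<forall>x\<in>S. pderiv_dir f i differentiable (at x)) \<and>
     (\<forall>i\<in>Basis. \<forall>j\<in>Basis. continuous_on S (pderiv_dir (pderiv_dir f i) j))"

definition p_laplacian :: "real \<Rightarrow> ('a::euclidean_space \<Rightarrow> real) \<Rightarrow> 'a \<Rightarrow> real" where
  "p_laplacian p u x = (norm (grad u x))\<^sup>2 * laplacian u x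
      + (p - 2) / 2 * (grad u x \<bullet> grad (\<lambda>y. (norm (grad u y))\<^sup>2) x)"

definition p_harmonic_on :: "real \<Rightarrow> 'a::euclidean_space set \<Rightarrow> ('a \<Rightarrow> real) \<Rightarrow> bool" where
  "p_harmonic_on p S u \<longleftrightarrow> open S \<and> C2_on S u \<and> (\<forall>x\<in>S. p_laplacian p u x = 0)"

definition inf_harmonic_on :: "'a::euclidean_space set \<Rightarrow> ('a \<Rightarrow> real) \<Rightarrow> bool" where
  "inf_harmonic_on S u \<longleftrightarrow> open S \<and> C2_on S u \<and>
     (\<forall>x\<in>S. grad u x \<bullet> grad (\<lambda>y. (norm (grad u y))\<^sup>2) x = 0)"

definition homogeneous_poly :: "nat \<Rightarrow> (real^'n \<Rightarrow> real) \<Rightarrow> bool" where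
  "homogeneous_poly m f \<longleftrightarrow> (\<exists>c :: ('n \<Rightarrow> nat) \<Rightarrow> real.
      finite {\<alpha>. c \<alpha> \<noteq> 0} \<and> (\<forall>\<alpha>. c \<alpha> \<noteq> 0 \<longrightarrow> (\<Sum>i\<in>UNIV. \<alpha> i) = m) \<and>
      f = (\<lambda>x. \<Sum>\<alpha>\<in>{\<alpha>. c \<alpha> \<noteq> 0}. c \<alpha> * (\<Prod>i\<in>UNIV. (x $ i) ^ (\<alpha> i))))"

end

theory Submission
  imports Defs
begin

text \<open>
  Put \<open>t = \<phi> |x|\<^sup>-\<^sup>m\<close>. Euler's identity \<open>\<nabla>\<phi> \<cdot> x = m \<phi>\<close>, the eikonal equation and
  \<open>\<Delta>\<phi> = 0\<close> give \<open>\<nabla>t \<cdot> x = 0\<close>, \<open>|\<nabla>t|\<^sup>2 = m\<^sup>2(1 - t\<^sup>2)/|x|\<^sup>2\<close> and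
  \<open>\<Delta>t = -m\<^sup>2(m\<^sub>1 + 1) t/|x|\<^sup>2\<close> when \<open>n = m m\<^sub>1 + 2\<close>. For a profile \<open>u = f(t)\<close> the chain
  rule then reduces the p-Laplacian to \<open>f'(t)\<^sup>3 t |\<nabla>t|\<^sup>2 m\<^sup>2/|x|\<^sup>2 ((c - 1)(p - 1) - m\<^sub>1)\<close>
  as soon as \<open>f''(s)(1 - s\<^sup>2) = c s f'(s)\<close>; \<open>artanh\<close>, \<open>s/\<surd>(1 - s\<^sup>2)\<close> and \<open>arcsin\<close>
  solve this with \<open>c = 2, 3, 1\<close>. For \<open>ln(|x|/|y|)\<close> on \<open>\<real>\<^sup>k \<times> \<real>\<^sup>k\<close> one has
  \<open>|\<nabla>u|\<^sup>2 = |x|\<^sup>-\<^sup>2 + |y|\<^sup>-\<^sup>2\<close> and \<open>\<Delta>u = (k - 2)(|x|\<^sup>-\<^sup>2 - |y|\<^sup>-\<^sup>2)\<close>, and the two terms of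
  the k-Laplacian cancel.
\<close>

section \<open>Gradients and Laplacians\<close>

definition has_grad_on :: "'a::euclidean_space set \<Rightarrow> ('a \<Rightarrow> real) \<Rightarrow> ('a \<Rightarrow> 'a) \<Rightarrow> bool" where
  "has_grad_on S f G \<longleftrightarrow> open S \<and> (\<forall>x\<in>S. (f has_derivative (\<lambda>h. G x \<bullet> h)) (at x))"

definition has_grad_lap_on ::
    "'a::euclidean_space set \<Rightarrow> ('a \<Rightarrow> real) \<Rightarrow> ('a \<Rightarrow> 'a) \<Rightarrow> ('a \<Rightarrow> real) \<Rightarrow> bool" where
  "has_grad_lap_on S f G L \<longleftrightarrow> open S \<and> (\<exists>H.
     (\<forall>x\<in>S. (f has_derivative (\<lambda>h. G x \<bullet> h)) (at x) \<and> (G has_derivative H x) (at x)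
        \<and> L x = (\<Sum>i\<in>Basis. H x i \<bullet> i))
     \<and> (\<forall>i\<in>Basis. \<forall>j\<in>Basis. continuous_on S (\<lambda>x. H x j \<bullet> i)))"

lemma has_grad_lap_onI:
  assumes "open S"
    and "\<And>x. x \<in> S \<Longrightarrow> (f has_derivative (\<lambda>h. G x \<bullet> h)) (at x)"
    and "\<And>x. x \<in> S \<Longrightarrow> (G has_derivative H x) (at x)"
    and "\<And>x. x \<in> S \<Longrightarrow> L x = (\<Sum>i\<in>Basis. H x i \<bullet> i)"
    and "\<And>i j. i \<in> Basis \<Longrightarrow> j \<in> Basis \<Longrightarrow> continuous_on S (\<lambda>x. H x j \<bullet> i)"
  shows "has_grad_lap_on S f G L"
  unfolding has_grad_lap_on_def using assms by blast

lemma has_grad_lap_onE: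
  assumes "has_grad_lap_on S f G L"
  obtains H where "open S"
    and "\<And>x. x \<in> S \<Longrightarrow> (f has_derivative (\<lambda>h. G x \<bullet> h)) (at x)"
    and "\<And>x. x \<in> S \<Longrightarrow> (G has_derivative H x) (at x)"
    and "\<And>x. x \<in> S \<Longrightarrow> L x = (\<Sum>i\<in>Basis. H x i \<bullet> i)"
    and "\<And>i j. i \<in> Basis \<Longrightarrow> j \<in> Basis \<Longrightarrow> continuous_on S (\<lambda>x. H x j \<bullet> i)"
proof -
  from assms obtain H where "open S"
    and "\<forall>x\<in>S. (f has_derivative (\<lambda>h. G x \<bullet> h)) (at x) \<and> (G has_derivative H x) (at x)
           \<and> L x = (\<Sum>i\<in>Basis. H x i \<bullet> i)"
    and "\<forall>i\<in>Basis. \<forall>j\<in>Basis. continuous_on S (\<lambda>x. H x j \<bullet> i)"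
    unfolding has_grad_lap_on_def by blast
  then show thesis by (intro that[of H]) auto
qed

lemma has_grad_lap_on_imp_has_grad_on: "has_grad_lap_on S f G L \<Longrightarrow> has_grad_on S f G"
  unfolding has_grad_on_def by (elim has_grad_lap_onE) simp

lemma pderiv_dir_eq_inner:
  assumes "(f has_derivative (\<lambda>h. G \<bullet> h)) (at x)"
  shows "pderiv_dir f i x = G \<bullet> i"
  using frechet_derivative_at[OF assms] unfolding pderiv_dir_def by metis

lemma grad_eq_of_has_derivative:
  assumes "(f has_derivative (\<lambda>h. G \<bullet> h)) (at x)"
  shows "grad f x = G"
  unfolding grad_def pderiv_dir_eq_inner[OF assms] by (rule euclidean_representation)

lemma has_grad_on_grad_eq:
  assumes "has_grad_on S f G" "x \<in> S" "\<And>y. y \<in> S \<Longrightarrow> g y = f y"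
  shows "grad g x = G x"
proof -
  have "(f has_derivative (\<lambda>h. G x \<bullet> h)) (at x)" "open S"
    using assms(1,2) unfolding has_grad_on_def by auto
  then have "(g has_derivative (\<lambda>h. G x \<bullet> h)) (at x)"
    using assms(2,3) by (metis has_derivative_transform_within_open)
  then show ?thesis by (rule grad_eq_of_has_derivative)
qed

lemma has_grad_lap_onD:
  assumes "has_grad_lap_on S f G L"
  shows "C2_on S f" and "x \<in> S \<Longrightarrow> grad f x = G x" and "x \<in> S \<Longrightarrow> laplacian f x = L x"
proof -
  obtain H where S: "open S"
    and f: "\<And>x. x \<in> S \<Longrightarrow> (f has_derivative (\<lambda>h. G x \<bullet> h)) (at x)"
    and G: "\<And>x. x \<in> S \<Longrightarrow> (G has_derivative H x) (at x)"
    and L: "\<And>x. x \<in> S \<Longrightarrow> L x = (\<Sum>i\<in>Basis. H x i \<bullet> i)"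
    and H: "\<And>i j. i \<in> Basis \<Longrightarrow> j \<in> Basis \<Longrightarrow> continuous_on S (\<lambda>x. H x j \<bullet> i)"
    using has_grad_lap_onE[OF assms] by blast
  have d2: "(pderiv_dir f i has_derivative (\<lambda>h. H x h \<bullet> i)) (at x)" if "x \<in> S" for i x
  proof -
    have "((\<lambda>y. G y \<bullet> i) has_derivative (\<lambda>h. H x h \<bullet> i)) (at x)"
      using G[OF that] by (auto intro!: derivative_eq_intros)
    then show ?thesis
      by (rule has_derivative_transform_within_open[OF _ S that]) (metis pderiv_dir_eq_inner f)
  qed
  have pd2: "pderiv_dir (pderiv_dir f i) j x = H x j \<bullet> i" if "x \<in> S" for i j x
    using frechet_derivative_at[OF d2[OF that]] unfolding pderiv_dir_def by metis
  show "C2_on S f"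
    unfolding C2_on_def
  proof (intro conjI ballI)
    show "f differentiable at x" if "x \<in> S" for x using f[OF that] by (rule differentiableI)
    show "pderiv_dir f i differentiable at x" if "x \<in> S" for i x using d2[OF that] by (rule differentiableI)
    show "continuous_on S (pderiv_dir (pderiv_dir f i) j)" if "i \<in> Basis" "j \<in> Basis" for i j
      using H[OF that] by (rule continuous_on_eq) (simp add: pd2)
  qed
  show "grad f x = G x" if "x \<in> S" using f[OF that] by (rule grad_eq_of_has_derivative)
  show "laplacian f x = L x" if "x \<in> S"
    using L[OF that] pd2[OF that] unfolding laplacian_def by simp
qed

lemma p_laplacian_eq:
  assumes "has_grad_lap_on S f G L" "has_grad_on S (\<lambda>y. G y \<bullet> G y) DN" "x \<in> S"
  shows "p_laplacian p f x = (G x \<bullet> G x) * L x + (p - 2) / 2 * (G x \<bullet> DN x)"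
    and "grad f x \<bullet> grad (\<lambda>y. (norm (grad f y))\<^sup>2) x = G x \<bullet> DN x"
proof -
  have G: "grad f y = G y" if "y \<in> S" for y using has_grad_lap_onD(2)[OF assms(1) that] .
  have "grad (\<lambda>y. (norm (grad f y))\<^sup>2) x = DN x"
    using assms(2,3) by (rule has_grad_on_grad_eq) (simp add: G power2_norm_eq_inner)
  then show "p_laplacian p f x = (G x \<bullet> G x) * L x + (p - 2) / 2 * (G x \<bullet> DN x)"
    and "grad f x \<bullet> grad (\<lambda>y. (norm (grad f y))\<^sup>2) x = G x \<bullet> DN x"
    unfolding p_laplacian_def using G assms(3) has_grad_lap_onD(3)[OF assms(1,3)]
    by (auto simp: power2_norm_eq_inner)
qed

lemma has_grad_lap_on_continuous:
  assumes "has_grad_lap_on S f G L"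
  shows "continuous_on S f" and "continuous_on S G"
proof -
  obtain H where "open S"
    and f: "\<And>x. x \<in> S \<Longrightarrow> (f has_derivative (\<lambda>h. G x \<bullet> h)) (at x)"
    and G: "\<And>x. x \<in> S \<Longrightarrow> (G has_derivative H x) (at x)"
    and "\<And>x. x \<in> S \<Longrightarrow> L x = (\<Sum>i\<in>Basis. H x i \<bullet> i)"
    and "\<And>i j. i \<in> Basis \<Longrightarrow> j \<in> Basis \<Longrightarrow> continuous_on S (\<lambda>x. H x j \<bullet> i)"
    using has_grad_lap_onE[OF assms] by blast
  show "continuous_on S f"
    by (rule has_derivative_continuous_on, rule has_derivative_at_withinI, erule f)
  show "continuous_on S G"
    by (rule has_derivative_continuous_on, rule has_derivative_at_withinI, erule G)
qed

lemma has_grad_lap_on_cong: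
  assumes "has_grad_lap_on S f G L"
    and "\<And>x. x \<in> S \<Longrightarrow> f x = f' x" "\<And>x. x \<in> S \<Longrightarrow> G x = G' x" "\<And>x. x \<in> S \<Longrightarrow> L x = L' x"
  shows "has_grad_lap_on S f' G' L'"
proof -
  obtain H where S: "open S"
    and f: "\<And>x. x \<in> S \<Longrightarrow> (f has_derivative (\<lambda>h. G x \<bullet> h)) (at x)"
    and G: "\<And>x. x \<in> S \<Longrightarrow> (G has_derivative H x) (at x)"
    and L: "\<And>x. x \<in> S \<Longrightarrow> L x = (\<Sum>i\<in>Basis. H x i \<bullet> i)"
    and H: "\<And>i j. i \<in> Basis \<Longrightarrow> j \<in> Basis \<Longrightarrow> continuous_on S (\<lambda>x. H x j \<bullet> i)"
    using has_grad_lap_onE[OF assms(1)] by blast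
  show ?thesis
  proof (rule has_grad_lap_onI[OF S _ _ _ H])
    fix x assume x: "x \<in> S"
    show "(f' has_derivative (\<lambda>h. G' x \<bullet> h)) (at x)"
      using has_derivative_transform_within_open[OF f[OF x] S x assms(2)] assms(3)[OF x] by simp
    show "(G' has_derivative H x) (at x)"
      using has_derivative_transform_within_open[OF G[OF x] S x assms(3)] .
    show "L' x = (\<Sum>i\<in>Basis. H x i \<bullet> i)" using L[OF x] assms(4)[OF x] by simp
  qed
qed

lemma has_grad_lap_on_subset:
  "has_grad_lap_on S f G L \<Longrightarrow> open T \<Longrightarrow> T \<subseteq> S \<Longrightarrow> has_grad_lap_on T f G L"
  by (elim has_grad_lap_onE, rule has_grad_lap_onI) (blast intro: continuous_on_subset)+

lemma has_grad_lap_on_const: "open S \<Longrightarrow> has_grad_lap_on S (\<lambda>x. c) (\<lambda>x. 0) (\<lambda>x. 0)"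
  by (rule has_grad_lap_onI[where H = "\<lambda>x h. 0"]) (simp_all add: inner_zero_left[abs_def])

lemma has_grad_lap_on_add:
  assumes "has_grad_lap_on S f F Lf" "has_grad_lap_on S g G Lg"
  shows "has_grad_lap_on S (\<lambda>x. f x + g x) (\<lambda>x. F x + G x) (\<lambda>x. Lf x + Lg x)"
proof -
  obtain HF where S: "open S"
    and f: "\<And>x. x \<in> S \<Longrightarrow> (f has_derivative (\<lambda>h. F x \<bullet> h)) (at x)"
    and F: "\<And>x. x \<in> S \<Longrightarrow> (F has_derivative HF x) (at x)"
    and Lf: "\<And>x. x \<in> S \<Longrightarrow> Lf x = (\<Sum>i\<in>Basis. HF x i \<bullet> i)"
    and HF: "\<And>i j. i \<in> Basis \<Longrightarrow> j \<in> Basis \<Longrightarrow> continuous_on S (\<lambda>x. HF x j \<bullet> i)"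
    using has_grad_lap_onE[OF assms(1)] by blast
  obtain HG where "open S"
    and g: "\<And>x. x \<in> S \<Longrightarrow> (g has_derivative (\<lambda>h. G x \<bullet> h)) (at x)"
    and G: "\<And>x. x \<in> S \<Longrightarrow> (G has_derivative HG x) (at x)"
    and Lg: "\<And>x. x \<in> S \<Longrightarrow> Lg x = (\<Sum>i\<in>Basis. HG x i \<bullet> i)"
    and HG: "\<And>i j. i \<in> Basis \<Longrightarrow> j \<in> Basis \<Longrightarrow> continuous_on S (\<lambda>x. HG x j \<bullet> i)"
    using has_grad_lap_onE[OF assms(2)] by blast
  show ?thesis
  proof (rule has_grad_lap_onI[OF S, where H = "\<lambda>x h. HF x h + HG x h"])
    fix x assume x: "x \<in> S"
    show "((\<lambda>x. f x + g x) has_derivative (\<lambda>h. (F x + G x) \<bullet> h)) (at x)"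
      using f[OF x] g[OF x] by (auto intro!: derivative_eq_intros simp: inner_add_left)
    show "((\<lambda>x. F x + G x) has_derivative (\<lambda>h. HF x h + HG x h)) (at x)"
      using F[OF x] G[OF x] by (rule has_derivative_add)
    show "Lf x + Lg x = (\<Sum>i\<in>Basis. (HF x i + HG x i) \<bullet> i)"
      using Lf[OF x] Lg[OF x] by (simp add: inner_add_left sum.distrib)
  next
    fix i j :: 'a assume "i \<in> Basis" "j \<in> Basis"
    then show "continuous_on S (\<lambda>x. (HF x j + HG x j) \<bullet> i)"
      using HF HG by (simp add: inner_add_left continuous_on_add)
  qed
qed

lemma has_grad_lap_on_mult:
  assumes "has_grad_lap_on S f F Lf" "has_grad_lap_on S g G Lg"
  shows "has_grad_lap_on S (\<lambda>x. f x * g x) (\<lambda>x. f x *\<^sub>R G x + g x *\<^sub>R F x)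
     (\<lambda>x. f x * Lg x + g x * Lf x + 2 * (F x \<bullet> G x))"
proof -
  obtain HF where S: "open S"
    and f: "\<And>x. x \<in> S \<Longrightarrow> (f has_derivative (\<lambda>h. F x \<bullet> h)) (at x)"
    and F: "\<And>x. x \<in> S \<Longrightarrow> (F has_derivative HF x) (at x)"
    and Lf: "\<And>x. x \<in> S \<Longrightarrow> Lf x = (\<Sum>i\<in>Basis. HF x i \<bullet> i)"
    and HF: "\<And>i j. i \<in> Basis \<Longrightarrow> j \<in> Basis \<Longrightarrow> continuous_on S (\<lambda>x. HF x j \<bullet> i)"
    using has_grad_lap_onE[OF assms(1)] by blast
  obtain HG where "open S"
    and g: "\<And>x. x \<in> S \<Longrightarrow> (g has_derivative (\<lambda>h. G x \<bullet> h)) (at x)"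
    and G: "\<And>x. x \<in> S \<Longrightarrow> (G has_derivative HG x) (at x)"
    and Lg: "\<And>x. x \<in> S \<Longrightarrow> Lg x = (\<Sum>i\<in>Basis. HG x i \<bullet> i)"
    and HG: "\<And>i j. i \<in> Basis \<Longrightarrow> j \<in> Basis \<Longrightarrow> continuous_on S (\<lambda>x. HG x j \<bullet> i)"
    using has_grad_lap_onE[OF assms(2)] by blast
  note cont = has_grad_lap_on_continuous[OF assms(1)] has_grad_lap_on_continuous[OF assms(2)]
  show ?thesis
  proof (rule has_grad_lap_onI[OF S,
        where H = "\<lambda>x h. (F x \<bullet> h) *\<^sub>R G x + f x *\<^sub>R HG x h + (G x \<bullet> h) *\<^sub>R F x + g x *\<^sub>R HF x h"])
    fix x assume x: "x \<in> S"
    show "((\<lambda>x. f x * g x) has_derivative (\<lambda>h. (f x *\<^sub>R G x + g x *\<^sub>R F x) \<bullet> h)) (at x)"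
      using f[OF x] g[OF x] by (auto intro!: derivative_eq_intros simp: inner_add_left algebra_simps)
    show "((\<lambda>x. f x *\<^sub>R G x + g x *\<^sub>R F x) has_derivative
        (\<lambda>h. (F x \<bullet> h) *\<^sub>R G x + f x *\<^sub>R HG x h + (G x \<bullet> h) *\<^sub>R F x + g x *\<^sub>R HF x h)) (at x)"
      using f[OF x] g[OF x] F[OF x] G[OF x] by (auto intro!: derivative_eq_intros simp: algebra_simps)
    show "f x * Lg x + g x * Lf x + 2 * (F x \<bullet> G x) =
        (\<Sum>i\<in>Basis. ((F x \<bullet> i) *\<^sub>R G x + f x *\<^sub>R HG x i + (G x \<bullet> i) *\<^sub>R F x + g x *\<^sub>R HF x i) \<bullet> i)"
      using Lf[OF x] Lg[OF x] euclidean_inner[of "F x" "G x"]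
      by (simp add: inner_add_left sum.distrib sum_distrib_left algebra_simps)
  next
    fix i j :: 'a assume "i \<in> Basis" "j \<in> Basis"
    then have "continuous_on S (\<lambda>x. HF x j \<bullet> i)" "continuous_on S (\<lambda>x. HG x j \<bullet> i)"
      by (simp_all add: HF HG)
    then show "continuous_on S
        (\<lambda>x. ((F x \<bullet> j) *\<^sub>R G x + f x *\<^sub>R HG x j + (G x \<bullet> j) *\<^sub>R F x + g x *\<^sub>R HF x j) \<bullet> i)"
      using cont by (auto simp: inner_add_left intro!: continuous_intros)
  qed
qed

lemma has_grad_lap_on_compose:
  assumes g: "has_grad_lap_on S g G L" and U: "open U" "\<And>x. x \<in> S \<Longrightarrow> g x \<in> U"
    and f: "\<And>s. s \<in> U \<Longrightarrow> (f has_real_derivative f' s) (at s)"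
      "\<And>s. s \<in> U \<Longrightarrow> (f' has_real_derivative f'' s) (at s)" "continuous_on U f''"
  shows "has_grad_lap_on S (\<lambda>x. f (g x)) (\<lambda>x. f' (g x) *\<^sub>R G x)
    (\<lambda>x. f'' (g x) * (G x \<bullet> G x) + f' (g x) * L x)"
proof -
  obtain H where S: "open S"
    and g': "\<And>x. x \<in> S \<Longrightarrow> (g has_derivative (\<lambda>h. G x \<bullet> h)) (at x)"
    and G: "\<And>x. x \<in> S \<Longrightarrow> (G has_derivative H x) (at x)"
    and L: "\<And>x. x \<in> S \<Longrightarrow> L x = (\<Sum>i\<in>Basis. H x i \<bullet> i)"
    and H: "\<And>i j. i \<in> Basis \<Longrightarrow> j \<in> Basis \<Longrightarrow> continuous_on S (\<lambda>x. H x j \<bullet> i)"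
    using has_grad_lap_onE[OF g] by blast
  note cont = has_grad_lap_on_continuous[OF g]
  have "continuous_on U f'"
    using f(2) by (metis DERIV_isCont continuous_at_imp_continuous_on)
  then have cont_f: "continuous_on S (\<lambda>x. f' (g x))" "continuous_on S (\<lambda>x. f'' (g x))"
    using continuous_on_compose2[OF _ cont(1)] f(3) U(2) by blast+
  have chain: "((\<lambda>x. k (g x)) has_derivative (\<lambda>h. (G x \<bullet> h) * k' (g x))) (at x)"
    if "x \<in> S" "\<And>s. s \<in> U \<Longrightarrow> (k has_real_derivative k' s) (at s)" for k k' x
    using DERIV_compose_FDERIV[OF that(2)[OF U(2)[OF that(1)]] g'[OF that(1)]] .
  show ?thesis
  proof (rule has_grad_lap_onI[OF S, where H = "\<lambda>x h. (f'' (g x) * (G x \<bullet> h)) *\<^sub>R G x + f' (g x) *\<^sub>R H x h"])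
    fix x assume x: "x \<in> S"
    show "((\<lambda>x. f (g x)) has_derivative (\<lambda>h. (f' (g x) *\<^sub>R G x) \<bullet> h)) (at x)"
      using chain[OF x f(1)] by (rule has_derivative_eq_rhs) (auto simp: fun_eq_iff)
    show "((\<lambda>x. f' (g x) *\<^sub>R G x) has_derivative
        (\<lambda>h. (f'' (g x) * (G x \<bullet> h)) *\<^sub>R G x + f' (g x) *\<^sub>R H x h)) (at x)"
      using has_derivative_scaleR[OF chain[OF x f(2)] G[OF x]]
      by (rule has_derivative_eq_rhs) (auto simp: fun_eq_iff algebra_simps)
    show "f'' (g x) * (G x \<bullet> G x) + f' (g x) * L x =
        (\<Sum>i\<in>Basis. ((f'' (g x) * (G x \<bullet> i)) *\<^sub>R G x + f' (g x) *\<^sub>R H x i) \<bullet> i)"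
      using L[OF x] euclidean_inner[of "G x" "G x"]
      by (simp add: inner_add_left sum.distrib sum_distrib_left algebra_simps)
  next
    fix i j :: 'a assume "i \<in> Basis" "j \<in> Basis"
    then have "continuous_on S (\<lambda>x. H x j \<bullet> i)" by (rule H)
    then show "continuous_on S (\<lambda>x. ((f'' (g x) * (G x \<bullet> j)) *\<^sub>R G x + f' (g x) *\<^sub>R H x j) \<bullet> i)"
      using cont cont_f by (auto simp: inner_add_left intro!: continuous_intros)
  qed
qed

lemma has_grad_on_cong:
  assumes "has_grad_on S f G" "\<And>x. x \<in> S \<Longrightarrow> f x = f' x" "\<And>x. x \<in> S \<Longrightarrow> G x = G' x"
  shows "has_grad_on S f' G'"
  using assms unfolding has_grad_on_def by (metis has_derivative_transform_within_open)

lemma has_grad_on_subset: "has_grad_on S f G \<Longrightarrow> open T \<Longrightarrow> T \<subseteq> S \<Longrightarrow> has_grad_on T f G"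
  unfolding has_grad_on_def by blast

lemma has_grad_on_add:
  "has_grad_on S f F \<Longrightarrow> has_grad_on S g G \<Longrightarrow> has_grad_on S (\<lambda>x. f x + g x) (\<lambda>x. F x + G x)"
  unfolding has_grad_on_def by (auto intro!: derivative_eq_intros simp: inner_add_left)

lemma has_grad_on_mult:
  "has_grad_on S f F \<Longrightarrow> has_grad_on S g G \<Longrightarrow>
    has_grad_on S (\<lambda>x. f x * g x) (\<lambda>x. f x *\<^sub>R G x + g x *\<^sub>R F x)"
  unfolding has_grad_on_def by (auto intro!: derivative_eq_intros simp: inner_add_left algebra_simps)

lemma has_grad_on_compose:
  assumes "has_grad_on S g G" "\<And>x. x \<in> S \<Longrightarrow> g x \<in> U"
    and "\<And>s. s \<in> U \<Longrightarrow> (f has_real_derivative f' s) (at s)"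
  shows "has_grad_on S (\<lambda>x. f (g x)) (\<lambda>x. f' (g x) *\<^sub>R G x)"
  unfolding has_grad_on_def
proof (intro conjI ballI)
  show "open S" using assms(1) unfolding has_grad_on_def ..
  fix x assume x: "x \<in> S"
  have "(g has_derivative (\<lambda>h. G x \<bullet> h)) (at x)" using assms(1) x unfolding has_grad_on_def by blast
  from DERIV_compose_FDERIV[OF assms(3)[OF assms(2)[OF x]] this]
  show "((\<lambda>x. f (g x)) has_derivative (\<lambda>h. (f' (g x) *\<^sub>R G x) \<bullet> h)) (at x)"
    by (rule has_derivative_eq_rhs) (auto simp: fun_eq_iff)
qed

lemma has_grad_lap_on_inner_self:
  "has_grad_lap_on UNIV (\<lambda>x::'a::euclidean_space. x \<bullet> x) (\<lambda>x. 2 *\<^sub>R x) (\<lambda>x. 2 * real DIM('a))"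
  by (rule has_grad_lap_onI[where H = "\<lambda>x h. 2 *\<^sub>R h"])
    (auto intro!: derivative_eq_intros simp: inner_commute)

lemma has_grad_lap_on_norm:
  "has_grad_lap_on (-{0}) (\<lambda>x::'a::euclidean_space. norm x) (\<lambda>x. (1 / norm x) *\<^sub>R x)
    (\<lambda>x. (real DIM('a) - 1) / norm x)"
proof -
  have sqrt': "(sqrt has_real_derivative 1 / (2 * sqrt s)) (at s)" if "s \<in> {0<..}" for s
    using DERIV_real_sqrt[of s] that by (simp add: field_simps)
  have sqrt'': "((\<lambda>s. 1 / (2 * sqrt s)) has_real_derivative - 1 / (4 * s * sqrt s)) (at s)"
    if "s \<in> {0<..}" for s
    using that by (auto intro!: derivative_eq_intros simp: field_simps power2_eq_square)
  have cont: "continuous_on {0<..} (\<lambda>s::real. - 1 / (4 * s * sqrt s))"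
    by (intro continuous_intros) auto
  have pos: "x \<bullet> x \<in> {0<..}" if "x \<in> -{0}" for x :: 'a
    using that by simp
  have "has_grad_lap_on (-{0}) (\<lambda>x::'a. x \<bullet> x) (\<lambda>x. 2 *\<^sub>R x) (\<lambda>x. 2 * real DIM('a))"
    by (rule has_grad_lap_on_subset[OF has_grad_lap_on_inner_self]) (auto simp: open_Compl)
  from has_grad_lap_on_compose[OF this open_greaterThan pos sqrt' sqrt'' cont]
  show ?thesis
  proof (rule has_grad_lap_on_cong)
    fix x :: 'a assume "x \<in> -{0}"
    then have r: "norm x > 0" by simp
    have e: "sqrt (x \<bullet> x) = norm x" "x \<bullet> x = (norm x)\<^sup>2"
      by (simp_all add: norm_eq_sqrt_inner power2_norm_eq_inner)
    show "sqrt (x \<bullet> x) = norm x" by (rule e(1))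
    show "(1 / (2 * sqrt (x \<bullet> x))) *\<^sub>R (2 *\<^sub>R x) = (1 / norm x) *\<^sub>R x" using r by (simp add: e)
    show "- 1 / (4 * (x \<bullet> x) * sqrt (x \<bullet> x)) * ((2 *\<^sub>R x) \<bullet> (2 *\<^sub>R x))
        + 1 / (2 * sqrt (x \<bullet> x)) * (2 * real DIM('a)) = (real DIM('a) - 1) / norm x"
      using r unfolding e(1) by (simp add: e(2) field_simps power2_eq_square)
  qed
qed

lemma has_grad_lap_on_norm_powr:
  "has_grad_lap_on (-{0}) (\<lambda>x::'a::euclidean_space. norm x powr a)
    (\<lambda>x. (a * norm x powr (a - 2)) *\<^sub>R x) (\<lambda>x. a * (a + real DIM('a) - 2) * norm x powr (a - 2))"
proof -
  have powr': "((\<lambda>s. s powr a) has_real_derivative a * s powr (a - 1)) (at s)" if "s \<in> {0<..}" for s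
    using has_real_derivative_powr[of s a] that by simp
  have powr'': "((\<lambda>s. a * s powr (a - 1)) has_real_derivative a * ((a - 1) * s powr (a - 2))) (at s)"
    if "s \<in> {0<..}" for s
    using has_real_derivative_powr[of s "a - 1"] that by (auto intro: DERIV_cmult)
  have cont: "continuous_on {0<..} (\<lambda>s::real. a * ((a - 1) * s powr (a - 2)))"
    by (intro continuous_intros) auto
  have pos: "norm x \<in> {0<..}" if "x \<in> -{0}" for x :: 'a
    using that by simp
  from has_grad_lap_on_compose[OF has_grad_lap_on_norm open_greaterThan pos powr' powr'' cont]
  show ?thesis
  proof (rule has_grad_lap_on_cong)
    fix x :: 'a assume "x \<in> -{0}"
    then have r: "norm x > 0" by simp
    have r1: "norm x powr (a - 1) = norm x powr (a - 2) * norm x"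
      using powr_add[of "norm x" "a - 2" 1] by simp
    have xx: "x \<bullet> x = (norm x)\<^sup>2" by (simp add: power2_norm_eq_inner)
    show "(a * norm x powr (a - 1)) *\<^sub>R ((1 / norm x) *\<^sub>R x) = (a * norm x powr (a - 2)) *\<^sub>R x"
      using r by (simp add: r1)
    show "a * ((a - 1) * norm x powr (a - 2)) * (((1 / norm x) *\<^sub>R x) \<bullet> ((1 / norm x) *\<^sub>R x))
        + a * norm x powr (a - 1) * ((real DIM('a) - 1) / norm x)
        = a * (a + real DIM('a) - 2) * norm x powr (a - 2)"
      using r by (simp add: r1 xx field_simps power2_eq_square)
  qed simp_all
qed

lemma norm_powr_neg_nat: "x \<noteq> 0 \<Longrightarrow> norm x powr (- real n) = 1 / norm x ^ n"
  by (simp add: powr_minus_divide powr_realpow)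

lemma p_laplacian_compose:
  assumes t: "has_grad_lap_on S t Dt Lt" and M: "has_grad_on S M DM"
    and M_eq: "\<And>x. x \<in> S \<Longrightarrow> M x = Dt x \<bullet> Dt x"
    and U: "open U" "\<And>x. x \<in> S \<Longrightarrow> t x \<in> U"
    and f: "\<And>s. s \<in> U \<Longrightarrow> (f has_real_derivative f' s) (at s)"
      "\<And>s. s \<in> U \<Longrightarrow> (f' has_real_derivative f'' s) (at s)" "continuous_on U f''"
    and u: "\<And>x. x \<in> S \<Longrightarrow> u x = f (t x)"
  shows "C2_on S u"
    and "\<forall>x\<in>S. p_laplacian p u x = f' (t x) ^ 2 * M x * (f'' (t x) * M x + f' (t x) * Lt x)
        + (p - 2) / 2 * (f' (t x) ^ 3 * (Dt x \<bullet> DM x) + 2 * f' (t x) ^ 2 * f'' (t x) * M x ^ 2)"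
    and "\<forall>x\<in>S. grad u x \<bullet> grad (\<lambda>y. (norm (grad u y))\<^sup>2) x
        = f' (t x) ^ 3 * (Dt x \<bullet> DM x) + 2 * f' (t x) ^ 2 * f'' (t x) * M x ^ 2"
proof -
  have u': "has_grad_lap_on S u (\<lambda>x. f' (t x) *\<^sub>R Dt x) (\<lambda>x. f'' (t x) * M x + f' (t x) * Lt x)"
    using has_grad_lap_on_compose[OF t U f] by (rule has_grad_lap_on_cong) (simp_all add: u M_eq)
  then show "C2_on S u" by (rule has_grad_lap_onD)
  have "has_grad_on S (\<lambda>x. f' (t x) ^ 2) (\<lambda>x. (2 * f' (t x) * f'' (t x)) *\<^sub>R Dt x)"
    using has_grad_lap_on_imp_has_grad_on[OF t] U(2)
    by (rule has_grad_on_compose) (auto intro!: derivative_eq_intros f(2))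
  from has_grad_on_mult[OF this M]
  have "has_grad_on S (\<lambda>x. (f' (t x) *\<^sub>R Dt x) \<bullet> (f' (t x) *\<^sub>R Dt x))
      (\<lambda>x. f' (t x) ^ 2 *\<^sub>R DM x + (2 * f' (t x) * f'' (t x) * M x) *\<^sub>R Dt x)"
    by (rule has_grad_on_cong) (simp_all add: M_eq power2_eq_square mult.commute)
  note formulas = p_laplacian_eq[OF u' this]
  have "(f' (t x) *\<^sub>R Dt x) \<bullet> (f' (t x) ^ 2 *\<^sub>R DM x + (2 * f' (t x) * f'' (t x) * M x) *\<^sub>R Dt x)
      = f' (t x) ^ 3 * (Dt x \<bullet> DM x) + 2 * f' (t x) ^ 2 * f'' (t x) * M x ^ 2"
    and "(f' (t x) *\<^sub>R Dt x) \<bullet> (f' (t x) *\<^sub>R Dt x) = f' (t x) ^ 2 * M x"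
    if "x \<in> S" for x
    by (simp_all add: inner_add_right M_eq[OF that] power2_eq_square power3_eq_cube algebra_simps)
  with formulas
  show "\<forall>x\<in>S. p_laplacian p u x = f' (t x) ^ 2 * M x * (f'' (t x) * M x + f' (t x) * Lt x)
        + (p - 2) / 2 * (f' (t x) ^ 3 * (Dt x \<bullet> DM x) + 2 * f' (t x) ^ 2 * f'' (t x) * M x ^ 2)"
    and "\<forall>x\<in>S. grad u x \<bullet> grad (\<lambda>y. (norm (grad u y))\<^sup>2) x
        = f' (t x) ^ 3 * (Dt x \<bullet> DM x) + 2 * f' (t x) ^ 2 * f'' (t x) * M x ^ 2"
    by simp_all
qed

section \<open>Polynomials\<close>

lemma has_grad_lap_on_coordinate:
  "has_grad_lap_on UNIV (\<lambda>x::real^'n. x $ i) (\<lambda>x. axis i 1) (\<lambda>x. 0)"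
proof (rule has_grad_lap_onI[where H = "\<lambda>x h. 0"])
  have "(\<bullet>) (axis i (1::real)) = (\<lambda>h::real^'n. h $ i)" by (simp add: fun_eq_iff inner_axis')
  then show "((\<lambda>x::real^'n. x $ i) has_derivative (\<lambda>h. axis i 1 \<bullet> h)) (at x)" for x
    by (simp add: bounded_linear_imp_has_derivative bounded_linear_vec_nth)
qed simp_all

lemma ex_has_grad_lap_on_sum:
  assumes "finite A" "open S" "\<And>a. a \<in> A \<Longrightarrow> \<exists>G L. has_grad_lap_on S (f a) G L"
  shows "\<exists>G L. has_grad_lap_on S (\<lambda>x. \<Sum>a\<in>A. f a x) G L"
  using assms
proof (induction A rule: finite_induct)
  case empty
  then show ?case using has_grad_lap_on_const by auto
next
  case (insert a A)
  then obtain G1 L1 G2 L2 where "has_grad_lap_on S (f a) G1 L1"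
    and "has_grad_lap_on S (\<lambda>x. \<Sum>a\<in>A. f a x) G2 L2"
    by blast
  from has_grad_lap_on_add[OF this] show ?case
    unfolding sum.insert[OF insert(1,2)] by blast
qed

lemma ex_has_grad_lap_on_prod:
  assumes "finite A" "open S" "\<And>a. a \<in> A \<Longrightarrow> \<exists>G L. has_grad_lap_on S (f a) G L"
  shows "\<exists>G L. has_grad_lap_on S (\<lambda>x. \<Prod>a\<in>A. f a x) G L"
  using assms
proof (induction A rule: finite_induct)
  case empty
  then show ?case using has_grad_lap_on_const by auto
next
  case (insert a A)
  then obtain G1 L1 G2 L2 where "has_grad_lap_on S (f a) G1 L1"
    and "has_grad_lap_on S (\<lambda>x. \<Prod>a\<in>A. f a x) G2 L2"
    by blast
  from has_grad_lap_on_mult[OF this] show ?case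
    unfolding prod.insert[OF insert(1,2)] by blast
qed

lemma ex_has_grad_lap_on_power:
  assumes "has_grad_lap_on S f G L"
  shows "\<exists>G L. has_grad_lap_on S (\<lambda>x. f x ^ k) G L"
proof (induction k)
  case 0
  have "open S" using assms by (rule has_grad_lap_onE)
  then show ?case using has_grad_lap_on_const by auto
next
  case (Suc k)
  then obtain G' L' where "has_grad_lap_on S (\<lambda>x. f x ^ k) G' L'" by blast
  from has_grad_lap_on_mult[OF assms this] show ?case by auto
qed

lemma homogeneous_poly_has_grad_lap:
  assumes "homogeneous_poly m \<phi>"
  shows "has_grad_lap_on UNIV \<phi> (grad \<phi>) (laplacian \<phi>)"
proof -
  obtain c where c: "finite {\<alpha>. c \<alpha> \<noteq> 0}"
    and \<phi>: "\<phi> = (\<lambda>x. \<Sum>\<alpha>\<in>{\<alpha>. c \<alpha> \<noteq> 0}. c \<alpha> * (\<Prod>i\<in>UNIV. (x $ i) ^ (\<alpha> i)))"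
    using assms unfolding homogeneous_poly_def by blast
  have "\<exists>G L. has_grad_lap_on UNIV (\<lambda>x::real^'a. c \<alpha> * (\<Prod>i\<in>UNIV. (x $ i) ^ (\<alpha> i))) G L" for \<alpha>
  proof -
    have "\<exists>G L. has_grad_lap_on UNIV (\<lambda>x::real^'a. \<Prod>i\<in>UNIV. (x $ i) ^ (\<alpha> i)) G L"
      by (rule ex_has_grad_lap_on_prod) (auto intro: ex_has_grad_lap_on_power has_grad_lap_on_coordinate)
    then obtain G L where "has_grad_lap_on UNIV (\<lambda>x::real^'a. \<Prod>i\<in>UNIV. (x $ i) ^ (\<alpha> i)) G L"
      by blast
    from has_grad_lap_on_mult[OF has_grad_lap_on_const[OF open_UNIV] this] show ?thesis by blast
  qed
  then have "\<exists>G L. has_grad_lap_on UNIV \<phi> G L"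
    unfolding \<phi> by (rule ex_has_grad_lap_on_sum[OF c open_UNIV])
  then obtain G L where GL: "has_grad_lap_on UNIV \<phi> G L" by blast
  then show ?thesis
    by (rule has_grad_lap_on_cong) (simp_all add: has_grad_lap_onD[OF GL])
qed

lemma homogeneous_poly_scaleR:
  assumes "homogeneous_poly m \<phi>"
  shows "\<phi> (s *\<^sub>R x) = s ^ m * \<phi> x"
proof -
  obtain c where deg: "\<And>\<alpha>. c \<alpha> \<noteq> 0 \<Longrightarrow> (\<Sum>i\<in>UNIV. \<alpha> i) = m"
    and \<phi>: "\<phi> = (\<lambda>x. \<Sum>\<alpha>\<in>{\<alpha>. c \<alpha> \<noteq> 0}. c \<alpha> * (\<Prod>i\<in>UNIV. (x $ i) ^ (\<alpha> i)))"
    using assms unfolding homogeneous_poly_def by blast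
  have "(\<Prod>i\<in>UNIV. ((s *\<^sub>R x) $ i) ^ \<alpha> i) = s ^ m * (\<Prod>i\<in>UNIV. (x $ i) ^ \<alpha> i)"
    if "c \<alpha> \<noteq> 0" for \<alpha>
    by (simp add: power_mult_distrib prod.distrib power_sum[symmetric] deg[OF that])
  then show ?thesis
    unfolding \<phi> sum_distrib_left by (intro sum.cong) auto
qed

lemma homogeneous_poly_euler:
  assumes "homogeneous_poly m \<phi>"
  shows "grad \<phi> x \<bullet> x = real m * \<phi> x"
proof -
  have scale: "((\<lambda>s::real. s *\<^sub>R x) has_derivative (\<lambda>h. h *\<^sub>R x)) (at 1)"
    by (auto intro!: derivative_eq_intros)
  have "(\<phi> has_derivative (\<lambda>h. grad \<phi> x \<bullet> h)) (at ((\<lambda>s. s *\<^sub>R x) 1))"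
    using homogeneous_poly_has_grad_lap[OF assms] by (elim has_grad_lap_onE) simp
  from has_derivative_compose[OF scale this]
  have "((\<lambda>s. \<phi> (s *\<^sub>R x)) has_real_derivative grad \<phi> x \<bullet> x) (at 1)"
    by (rule has_derivative_imp_has_field_derivative) (simp add: mult.commute)
  moreover have "((\<lambda>s. \<phi> (s *\<^sub>R x)) has_real_derivative real m * \<phi> x) (at 1)"
    unfolding homogeneous_poly_scaleR[OF assms] by (auto intro!: derivative_eq_intros)
  ultimately show ?thesis by (rule DERIV_unique)
qed

section \<open>Profiles of \<open>\<phi>/|x|\<^sup>m\<close>\<close>

lemma powr_minus_three_halves: "0 < d \<Longrightarrow> d powr (- 3 / 2) = 1 / (d * sqrt (d::real))"
  using powr_add[of d 1 "1 / 2"] by (simp add: powr_minus_divide powr_half_sqrt)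

text \<open>The parameter \<open>k\<close> is the paper's \<open>m\<^sub>1\<close>; it need not be an integer here.\<close>

locale eikonal_harmonic =
  fixes \<phi> :: "'a::euclidean_space \<Rightarrow> real" and D\<phi> :: "'a \<Rightarrow> 'a" and m :: nat and k :: real
  assumes m_pos: "m > 0"
    and dim: "real DIM('a) = real m * k + 2"
    and harmonic: "has_grad_lap_on UNIV \<phi> D\<phi> (\<lambda>_. 0)"
    and eikonal: "\<And>x. D\<phi> x \<bullet> D\<phi> x = (real m)\<^sup>2 * norm x ^ (2 * m - 2)"
    and euler: "\<And>x. D\<phi> x \<bullet> x = real m * \<phi> x"
begin

definition t :: "'a \<Rightarrow> real" where
  "t x = \<phi> x / norm x ^ m"

definition Dt :: "'a \<Rightarrow> 'a" where
  "Dt x = (1 / norm x ^ m) *\<^sub>R D\<phi> x - (real m * \<phi> x / norm x ^ (m + 2)) *\<^sub>R x"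

definition Lt :: "'a \<Rightarrow> real" where
  "Lt x = - (real m)\<^sup>2 * (k + 1) * t x / (norm x)\<^sup>2"

definition M :: "'a \<Rightarrow> real" where
  "M x = (real m)\<^sup>2 * (1 - (t x)\<^sup>2) / (norm x)\<^sup>2"

definition DM :: "'a \<Rightarrow> 'a" where
  "DM x = - (2 * (real m)\<^sup>2 * (1 - (t x)\<^sup>2) / norm x ^ 4) *\<^sub>R x
     - (2 * (real m)\<^sup>2 * t x / (norm x)\<^sup>2) *\<^sub>R Dt x"

definition region :: "'a set" where
  "region = {x. x \<noteq> 0 \<and> \<bar>\<phi> x\<bar> < norm x ^ m}"

lemma t_has_grad_lap: "has_grad_lap_on (-{0}) t Dt Lt"
proof -
  have "has_grad_lap_on (-{0}) \<phi> D\<phi> (\<lambda>_. 0)"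
    by (rule has_grad_lap_on_subset[OF harmonic]) (auto simp: open_Compl)
  from has_grad_lap_on_mult[OF this has_grad_lap_on_norm_powr[of "- real m"]]
  show ?thesis
  proof (rule has_grad_lap_on_cong)
    fix x :: 'a assume "x \<in> -{0}"
    then have x: "x \<noteq> 0" by simp
    have powr: "norm x powr (- real m) = 1 / norm x ^ m"
      "norm x powr (- real m - 2) = 1 / norm x ^ (m + 2)"
      using norm_powr_neg_nat[OF x, of m] norm_powr_neg_nat[OF x, of "m + 2"]
      by (simp_all add: add.commute)
    show "\<phi> x * norm x powr (- real m) = t x"
      by (simp add: t_def powr)
    show "\<phi> x *\<^sub>R (- real m * norm x powr (- real m - 2)) *\<^sub>R x + norm x powr (- real m) *\<^sub>R D\<phi> x
        = Dt x"
      by (simp add: Dt_def powr algebra_simps)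
    have r: "norm x ^ (m + 2) = norm x ^ m * (norm x)\<^sup>2" by (rule power_add)
    have "\<phi> x * (- real m * (- real m + real DIM('a) - 2) * norm x powr (- real m - 2))
        + norm x powr (- real m) * 0 + 2 * (D\<phi> x \<bullet> (- real m * norm x powr (- real m - 2)) *\<^sub>R x)
        = - (real m)\<^sup>2 * (k + 1) * \<phi> x / (norm x ^ m * (norm x)\<^sup>2)"
      unfolding powr r dim using x by (simp add: euler field_simps power2_eq_square)
    also have "\<dots> = Lt x"
      using x by (simp add: Lt_def t_def)
    finally show "\<phi> x * (- real m * (- real m + real DIM('a) - 2) * norm x powr (- real m - 2))
        + norm x powr (- real m) * 0 + 2 * (D\<phi> x \<bullet> (- real m * norm x powr (- real m - 2)) *\<^sub>R x)
        = Lt x" .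
  qed
qed

lemma Dt_inner_x: "x \<noteq> 0 \<Longrightarrow> Dt x \<bullet> x = 0"
  by (simp add: Dt_def inner_diff_left euler power_add dot_square_norm field_simps power2_eq_square)

lemma Dt_inner_Dt: "x \<noteq> 0 \<Longrightarrow> Dt x \<bullet> Dt x = M x"
proof -
  assume x: "x \<noteq> 0"
  define a b where "a = 1 / norm x ^ m" and "b = real m * \<phi> x / norm x ^ (m + 2)"
  have "2 * m - 2 + 2 = m + m" using m_pos by simp
  then have r: "norm x ^ (2 * m - 2) = norm x ^ m * norm x ^ m / (norm x)\<^sup>2"
    using x by (metis power_add nonzero_eq_divide_eq zero_less_norm_iff zero_less_power less_irrefl)
  have "Dt x \<bullet> Dt x = a\<^sup>2 * (D\<phi> x \<bullet> D\<phi> x) - 2 * a * b * (D\<phi> x \<bullet> x) + b\<^sup>2 * (x \<bullet> x)"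
    unfolding Dt_def a_def[symmetric] b_def[symmetric]
    by (simp add: inner_diff_left inner_diff_right inner_commute power2_eq_square algebra_simps)
  also have "\<dots> = M x"
    unfolding eikonal euler r using x
    by (simp add: a_def b_def M_def t_def power2_norm_eq_inner[symmetric] power_add field_simps
        power2_eq_square)
  finally show ?thesis .
qed

lemma M_has_grad: "has_grad_on (-{0}) M DM"
proof -
  have "has_grad_on (-{0}) (\<lambda>x. (real m)\<^sup>2 * (1 - (t x)\<^sup>2)) (\<lambda>x. (- 2 * (real m)\<^sup>2 * t x) *\<^sub>R Dt x)"
    using has_grad_lap_on_imp_has_grad_on[OF t_has_grad_lap]
    by (rule has_grad_on_compose[where U = UNIV and f' = "\<lambda>s. - 2 * (real m)\<^sup>2 * s"])
      (auto intro!: derivative_eq_intros)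
  from has_grad_on_mult[OF this has_grad_lap_on_imp_has_grad_on[OF has_grad_lap_on_norm_powr[of "- 2"]]]
  show ?thesis
  proof (rule has_grad_on_cong)
    fix x :: 'a assume "x \<in> -{0}"
    then have x: "x \<noteq> 0" by simp
    have powr: "norm x powr (- 2) = 1 / (norm x)\<^sup>2" "norm x powr (- 4) = 1 / norm x ^ 4"
      using norm_powr_neg_nat[OF x, of 2] norm_powr_neg_nat[OF x, of 4] by simp_all
    show "(real m)\<^sup>2 * (1 - (t x)\<^sup>2) * norm x powr (- 2) = M x"
      by (simp add: M_def powr)
    show "((real m)\<^sup>2 * (1 - (t x)\<^sup>2)) *\<^sub>R (- 2 * norm x powr (- 2 - 2)) *\<^sub>R x
        + norm x powr (- 2) *\<^sub>R (- 2 * (real m)\<^sup>2 * t x) *\<^sub>R Dt x = DM x"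
      using x by (simp add: DM_def powr algebra_simps flip: scaleR_add_left) (simp add: field_simps)
  qed
qed

lemma Dt_inner_DM: "x \<noteq> 0 \<Longrightarrow> Dt x \<bullet> DM x = - 2 * (real m)\<^sup>2 * t x * M x / (norm x)\<^sup>2"
  by (simp add: DM_def inner_diff_right Dt_inner_x Dt_inner_Dt)

lemma open_region: "open region"
proof -
  have "continuous_on UNIV \<phi>" by (rule has_grad_lap_on_continuous(1)[OF harmonic])
  then show ?thesis
    unfolding region_def by (intro open_Collect_conj open_Collect_neq open_Collect_less continuous_intros)
qed

lemma region_subset: "region \<subseteq> -{0}"
  by (auto simp: region_def)

lemma t_region: "x \<in> region \<Longrightarrow> t x \<in> {-1<..<1}"
  by (auto simp: region_def t_def abs_less_iff field_simps)

text \<open>Under the ODE, the p-Laplacian of \<open>f \<circ> t\<close> is \<open>f'(t)\<^sup>3 M t m\<^sup>2/|x|\<^sup>2\<close> times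
  \<open>(c - 1)(p - 1) - k\<close>, and \<open>\<nabla>u \<cdot> \<nabla>|\<nabla>u|\<^sup>2\<close> is the same factor times \<open>2(c - 1)\<close>.\<close>

lemma profile_harmonic:
  assumes f: "\<And>s. s \<in> {-1<..<1} \<Longrightarrow> (f has_real_derivative f' s) (at s)"
      "\<And>s. s \<in> {-1<..<1} \<Longrightarrow> (f' has_real_derivative f'' s) (at s)" "continuous_on {-1<..<1} f''"
    and ode: "\<And>s. s \<in> {-1<..<1} \<Longrightarrow> f'' s * (1 - s\<^sup>2) = c * s * f' s"
    and u: "\<And>x. x \<in> region \<Longrightarrow> u x = f (t x)"
  shows "(c - 1) * (p - 1) = k \<Longrightarrow> p_harmonic_on p region u"
    and "c = 1 \<Longrightarrow> inf_harmonic_on region u"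
proof -
  have t: "has_grad_lap_on region t Dt Lt"
    by (rule has_grad_lap_on_subset[OF t_has_grad_lap open_region region_subset])
  have M: "has_grad_on region M DM"
    by (rule has_grad_on_subset[OF M_has_grad open_region region_subset])
  have x0: "x \<noteq> 0" if "x \<in> region" for x using that region_subset by auto
  have M_eq: "M x = Dt x \<bullet> Dt x" if "x \<in> region" for x
    using Dt_inner_Dt[OF x0[OF that]] by simp
  \<comment> \<open>\<open>simplified\<close> discharges the trivial premises \<open>x \<in> region \<Longrightarrow> x \<in> region\<close> left by \<open>OF\<close>\<close>
  note formulas = p_laplacian_compose[OF t M M_eq open_greaterThanLessThan t_region f u, simplified]
  have pos: "1 - (t x)\<^sup>2 > 0" if "x \<in> region" for x
    using t_region[OF that] by (simp add: abs_square_less_1 abs_less_iff)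
  have f'': "f'' (t x) = c * t x * f' (t x) / (1 - (t x)\<^sup>2)" if "x \<in> region" for x
    using ode[OF t_region[OF that]] pos[OF that] by (simp add: field_simps)
  show "p_harmonic_on p region u" if "(c - 1) * (p - 1) = k"
    unfolding p_harmonic_on_def
  proof (intro conjI ballI open_region formulas(1))
    fix x assume x: "x \<in> region"
    show "p_laplacian p u x = 0"
      unfolding formulas(2)[rule_format, OF x] Dt_inner_DM[OF x0[OF x]] Lt_def f''[OF x] M_def
      using pos[OF x] x0[OF x]
      by (simp add: field_simps power2_eq_square power3_eq_cube flip: that)
  qed
  show "inf_harmonic_on region u" if "c = 1"
    unfolding inf_harmonic_on_def
  proof (intro conjI ballI open_region formulas(1))
    fix x assume x: "x \<in> region"
    show "grad u x \<bullet> grad (\<lambda>y. (norm (grad u y))\<^sup>2) x = 0"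
      unfolding formulas(3)[rule_format, OF x] Dt_inner_DM[OF x0[OF x]] f''[OF x] M_def that
      using pos[OF x] x0[OF x]
      by (simp add: field_simps power2_eq_square power3_eq_cube)
  qed
qed

lemma artanh_p_harmonic: "p_harmonic_on (1 + k) region (\<lambda>x. artanh (\<phi> x / norm x ^ m))"
proof (rule profile_harmonic(1)[where f' = "\<lambda>s. 1 / (1 - s\<^sup>2)" and f'' = "\<lambda>s. 2 * s / (1 - s\<^sup>2)\<^sup>2"
      and c = 2])
  fix s :: real assume "s \<in> {-1<..<1}"
  then have s: "\<bar>s\<bar> < 1" and "1 - s\<^sup>2 \<noteq> 0" by (auto simp: abs_square_less_1 power2_eq_1_iff)
  show "(artanh has_real_derivative 1 / (1 - s\<^sup>2)) (at s)"
    using s by (rule artanh_real_has_field_derivative)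
  show "((\<lambda>s. 1 / (1 - s\<^sup>2)) has_real_derivative 2 * s / (1 - s\<^sup>2)\<^sup>2) (at s)"
    using \<open>1 - s\<^sup>2 \<noteq> 0\<close> by (auto intro!: derivative_eq_intros simp: field_simps power2_eq_square)
  show "2 * s / (1 - s\<^sup>2)\<^sup>2 * (1 - s\<^sup>2) = 2 * s * (1 / (1 - s\<^sup>2))"
    using \<open>1 - s\<^sup>2 \<noteq> 0\<close> by (simp add: power2_eq_square)
next
  show "continuous_on {-1<..<1} (\<lambda>s::real. 2 * s / (1 - s\<^sup>2)\<^sup>2)"
    by (intro continuous_intros) (auto simp: power2_eq_1_iff)
qed (simp_all add: t_def)

lemma quotient_p_harmonic:
  "p_harmonic_on (1 + k / 2) region (\<lambda>x. \<phi> x / sqrt (norm x ^ (2 * m) - (\<phi> x)\<^sup>2))"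
proof (rule profile_harmonic(1)[where f = "\<lambda>s. s / sqrt (1 - s\<^sup>2)"
      and f' = "\<lambda>s. 1 / ((1 - s\<^sup>2) * sqrt (1 - s\<^sup>2))"
      and f'' = "\<lambda>s. 3 * s * (1 - s\<^sup>2) powr (- 5 / 2)" and c = 3])
  fix s :: real assume s_in: "s \<in> {-1<..<1}"
  then have s: "1 - s\<^sup>2 > 0" by (simp add: abs_square_less_1 abs_less_iff)
  show "((\<lambda>s. s / sqrt (1 - s\<^sup>2)) has_real_derivative 1 / ((1 - s\<^sup>2) * sqrt (1 - s\<^sup>2))) (at s)"
    using s by (auto intro!: derivative_eq_intros simp: field_simps power2_eq_square)
  have "((\<lambda>s. (1 - s\<^sup>2) powr (- 3 / 2)) has_real_derivative 3 * s * (1 - s\<^sup>2) powr (- 5 / 2)) (at s)"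
    using s by (auto intro!: derivative_eq_intros simp: field_simps)
  then show "((\<lambda>s. 1 / ((1 - s\<^sup>2) * sqrt (1 - s\<^sup>2))) has_real_derivative
      3 * s * (1 - s\<^sup>2) powr (- 5 / 2)) (at s)"
    by (rule has_field_derivative_transform_within_open[OF _ open_greaterThanLessThan s_in])
      (rule powr_minus_three_halves, simp add: abs_square_less_1 abs_less_iff)
  have "(1 - s\<^sup>2) powr (- 5 / 2) * (1 - s\<^sup>2) = (1 - s\<^sup>2) powr (- 3 / 2)"
    using s powr_add[of "1 - s\<^sup>2" "- 5 / 2" 1] by simp
  also have "\<dots> = 1 / ((1 - s\<^sup>2) * sqrt (1 - s\<^sup>2))"
    using s by (rule powr_minus_three_halves)
  finally show "3 * s * (1 - s\<^sup>2) powr (- 5 / 2) * (1 - s\<^sup>2) = 3 * s * (1 / ((1 - s\<^sup>2) * sqrt (1 - s\<^sup>2)))"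
    by (simp add: mult.assoc)
next
  show "continuous_on {-1<..<1} (\<lambda>s::real. 3 * s * (1 - s\<^sup>2) powr (- 5 / 2))"
    by (intro continuous_intros) (auto simp: power2_eq_1_iff)
  fix x assume x: "x \<in> region"
  then have x0: "x \<noteq> 0" and r: "norm x ^ m > 0" by (auto simp: region_def)
  have "norm x ^ (2 * m) - (\<phi> x)\<^sup>2 = (norm x ^ m)\<^sup>2 * (1 - (t x)\<^sup>2)"
    using x0 by (simp add: t_def field_simps power_mult mult.commute[of 2])
  then show "\<phi> x / sqrt (norm x ^ (2 * m) - (\<phi> x)\<^sup>2) = t x / sqrt (1 - (t x)\<^sup>2)"
    using r by (simp add: real_sqrt_mult t_def)
qed simp

lemma arcsin_inf_harmonic: "inf_harmonic_on region (\<lambda>x. arcsin (\<phi> x / norm x ^ m))"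
proof (rule profile_harmonic(2)[where f' = "\<lambda>s. 1 / sqrt (1 - s\<^sup>2)"
      and f'' = "\<lambda>s. s / ((1 - s\<^sup>2) * sqrt (1 - s\<^sup>2))" and c = 1])
  fix s :: real assume "s \<in> {-1<..<1}"
  then have "- 1 < s" "s < 1" and s: "1 - s\<^sup>2 > 0" by (auto simp: abs_square_less_1 abs_less_iff)
  show "(arcsin has_real_derivative 1 / sqrt (1 - s\<^sup>2)) (at s)"
    using DERIV_arcsin[OF \<open>- 1 < s\<close> \<open>s < 1\<close>] by (simp add: divide_inverse)
  show "((\<lambda>s. 1 / sqrt (1 - s\<^sup>2)) has_real_derivative s / ((1 - s\<^sup>2) * sqrt (1 - s\<^sup>2))) (at s)"
    using s by (auto intro!: derivative_eq_intros simp: field_simps power2_eq_square)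
  show "s / ((1 - s\<^sup>2) * sqrt (1 - s\<^sup>2)) * (1 - s\<^sup>2) = 1 * s * (1 / sqrt (1 - s\<^sup>2))"
    using s by simp
next
  show "continuous_on {-1<..<1} (\<lambda>s::real. s / ((1 - s\<^sup>2) * sqrt (1 - s\<^sup>2)))"
    by (intro continuous_intros) (auto simp: power2_eq_1_iff)
qed (simp_all add: t_def)

end

section \<open>The logarithm of a ratio of norms\<close>

lemma sum_Basis_prod:
  fixes g :: "'a::euclidean_space \<times> 'b::euclidean_space \<Rightarrow> 'c::comm_monoid_add"
  shows "(\<Sum>i\<in>Basis. g i) = (\<Sum>u\<in>Basis. g (u, 0)) + (\<Sum>v\<in>Basis. g (0, v))"
proof -
  have "inj_on (\<lambda>u. (u::'a, 0::'b)) Basis" "inj_on (\<lambda>v. (0::'a, v::'b)) Basis"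
    by (auto intro!: inj_onI)
  moreover have "(\<lambda>u. (u::'a, 0::'b)) ` Basis \<inter> (\<lambda>v. (0::'a, v::'b)) ` Basis = {}"
    by auto
  ultimately show ?thesis
    by (simp add: Basis_prod_def sum.union_disjoint sum.reindex)
qed

lemma has_grad_lap_on_fst_inner_self:
  "has_grad_lap_on UNIV (\<lambda>z::'a::euclidean_space \<times> 'b::euclidean_space. fst z \<bullet> fst z)
    (\<lambda>z. (2 *\<^sub>R fst z, 0)) (\<lambda>z. 2 * real DIM('a))"
  by (rule has_grad_lap_onI[where H = "\<lambda>z h. (2 *\<^sub>R fst h, 0)"])
    (auto intro!: derivative_eq_intros simp: inner_prod_def inner_commute sum_Basis_prod)

lemma has_grad_lap_on_snd_inner_self:
  "has_grad_lap_on UNIV (\<lambda>z::'a::euclidean_space \<times> 'b::euclidean_space. snd z \<bullet> snd z)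
    (\<lambda>z. (0, 2 *\<^sub>R snd z)) (\<lambda>z. 2 * real DIM('b))"
  by (rule has_grad_lap_onI[where H = "\<lambda>z h. (0, 2 *\<^sub>R snd h)"])
    (auto intro!: derivative_eq_intros simp: inner_prod_def inner_commute sum_Basis_prod)

lemma ln_norm_ratio_p_harmonic:
  "p_harmonic_on (real DIM('a)) {z :: 'a::euclidean_space \<times> 'a. fst z \<noteq> 0 \<and> snd z \<noteq> 0}
    (\<lambda>z. ln (norm (fst z) / norm (snd z)))"
proof -
  define S where "S = {z :: 'a \<times> 'a. fst z \<noteq> 0 \<and> snd z \<noteq> 0}"
  define q1 q2 where "q1 z = fst z \<bullet> fst z" and "q2 z = snd z \<bullet> snd z" for z :: "'a \<times> 'a"
  have S: "open S"
    unfolding S_def by (intro open_Collect_conj open_Collect_neq continuous_intros)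
  have q_pos: "q1 z \<in> {0<..}" "q2 z \<in> {0<..}" if "z \<in> S" for z
    using that by (auto simp: S_def q1_def q2_def)
  have q1: "has_grad_lap_on S q1 (\<lambda>z. (2 *\<^sub>R fst z, 0)) (\<lambda>z. 2 * real DIM('a))"
    unfolding q1_def by (rule has_grad_lap_on_subset[OF has_grad_lap_on_fst_inner_self S]) simp
  have q2: "has_grad_lap_on S q2 (\<lambda>z. (0, 2 *\<^sub>R snd z)) (\<lambda>z. 2 * real DIM('a))"
    unfolding q2_def by (rule has_grad_lap_on_subset[OF has_grad_lap_on_snd_inner_self S]) simp
  have ln': "(ln has_real_derivative 1 / s) (at s)" if "s \<in> {0<..}" for s :: real
    using DERIV_ln[of s] that by (simp add: divide_inverse)
  have inv': "((\<lambda>s. 1 / s) has_real_derivative - 1 / s\<^sup>2) (at s)" if "s \<in> {0<..}" for s :: real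
    using that by (auto intro!: derivative_eq_intros simp: field_simps power2_eq_square)
  have cont: "continuous_on {0<..} (\<lambda>s::real. - 1 / s\<^sup>2)"
    by (intro continuous_intros) auto
  note ln_q1 = has_grad_lap_on_compose[OF q1 open_greaterThan q_pos(1) ln' inv' cont]
    and ln_q2 = has_grad_lap_on_compose[OF q2 open_greaterThan q_pos(2) ln' inv' cont]
  define Gu where "Gu z = ((1 / q1 z) *\<^sub>R fst z, - (1 / q2 z) *\<^sub>R snd z)" for z
  have u: "has_grad_lap_on S (\<lambda>z. ln (norm (fst z) / norm (snd z))) Gu
      (\<lambda>z. (real DIM('a) - 2) * (1 / q1 z - 1 / q2 z))"
    using has_grad_lap_on_add[OF has_grad_lap_on_mult[OF has_grad_lap_on_const[OF S, where c = "1 / 2"] ln_q1]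
      has_grad_lap_on_mult[OF has_grad_lap_on_const[OF S, where c = "- 1 / 2"] ln_q2]]
  proof (rule has_grad_lap_on_cong)
    fix z assume z: "z \<in> S"
    have "norm (fst z) = sqrt (q1 z)" "norm (snd z) = sqrt (q2 z)"
      by (simp_all add: q1_def q2_def norm_eq_sqrt_inner)
    then show "1 / 2 * ln (q1 z) + - 1 / 2 * ln (q2 z) = ln (norm (fst z) / norm (snd z))"
      using q_pos[OF z] by (simp add: ln_div ln_sqrt)
  qed (use q_pos in \<open>auto simp: Gu_def q1_def[symmetric] q2_def[symmetric] field_simps
      power2_eq_square\<close>)
  have "has_grad_on S (\<lambda>z. 1 / q1 z) (\<lambda>z. (- 1 / (q1 z)\<^sup>2) *\<^sub>R (2 *\<^sub>R fst z, 0))"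
    using has_grad_lap_on_imp_has_grad_on[OF q1] q_pos(1) inv' by (rule has_grad_on_compose)
  moreover have "has_grad_on S (\<lambda>z. 1 / q2 z) (\<lambda>z. (- 1 / (q2 z)\<^sup>2) *\<^sub>R (0, 2 *\<^sub>R snd z))"
    using has_grad_lap_on_imp_has_grad_on[OF q2] q_pos(2) inv' by (rule has_grad_on_compose)
  ultimately have N: "has_grad_on S (\<lambda>z. Gu z \<bullet> Gu z)
      (\<lambda>z. (- 1 / (q1 z)\<^sup>2) *\<^sub>R (2 *\<^sub>R fst z, 0) + (- 1 / (q2 z)\<^sup>2) *\<^sub>R (0, 2 *\<^sub>R snd z))"
    by (rule has_grad_on_cong[OF has_grad_on_add])
      (use q_pos in \<open>auto simp: Gu_def q1_def q2_def field_simps power2_eq_square\<close>)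
  have "p_laplacian (real DIM('a)) (\<lambda>z. ln (norm (fst z) / norm (snd z))) z = 0" if z: "z \<in> S" for z
    unfolding p_laplacian_eq(1)[OF u N z] using q_pos[OF z]
    by (simp add: Gu_def q1_def[symmetric] q2_def[symmetric])
      (simp add: q1_def q2_def field_simps power2_eq_square)
  with S u show ?thesis
    unfolding p_harmonic_on_def S_def by (blast dest: has_grad_lap_onD(1))
qed

theorem mainTheorem5:
  fixes m m1 :: nat and \<phi> :: "real^'n \<Rightarrow> real"
  assumes "m > 0" and "m1 > 0"
    and "CARD('n) = m * m1 + 2"
    and "homogeneous_poly m \<phi>"
    and "\<And>x. (norm (grad \<phi> x))\<^sup>2 = (real m)\<^sup>2 * norm x ^ (2 * m - 2)"
    and "\<And>x. laplacian \<phi> x = 0"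
  defines "S \<equiv> {x::real^'n. x \<noteq> 0 \<and> \<bar>\<phi> x\<bar> < norm x ^ m}"
  shows "p_harmonic_on (1 + real m1) S (\<lambda>x. artanh (\<phi> x / norm x ^ m))
       \<and> p_harmonic_on (1 + real m1 / 2) S (\<lambda>x. \<phi> x / sqrt (norm x ^ (2 * m) - (\<phi> x)\<^sup>2))
       \<and> inf_harmonic_on S (\<lambda>x. arcsin (\<phi> x / norm x ^ m))
       \<and> p_harmonic_on (real CARD('k)) {z :: (real^'k) \<times> (real^'k). fst z \<noteq> 0 \<and> snd z \<noteq> 0}
           (\<lambda>z. ln (norm (fst z) / norm (snd z)))"
proof -
  have "has_grad_lap_on UNIV \<phi> (grad \<phi>) (\<lambda>_. 0)"
    using homogeneous_poly_has_grad_lap[OF assms(4)]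
    by (rule has_grad_lap_on_cong) (simp_all add: assms(6))
  then interpret eikonal_harmonic \<phi> "grad \<phi>" m "real m1"
    using assms(1,3,5) homogeneous_poly_euler[OF assms(4)]
    by unfold_locales (simp_all add: power2_norm_eq_inner)
  have "S = region" by (simp add: S_def region_def)
  then show ?thesis
    using artanh_p_harmonic quotient_p_harmonic arcsin_inf_harmonic
      ln_norm_ratio_p_harmonic[where 'a = "real^'k"]
    by simp
qed

end
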